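(* Let $R$ be a valuation domain of cardinality $\aleph_1$ with quotient field $Q$, where $Q$ is not countably generated as an $R$-module. If the type $Q/R$ is essentially countable, then it is strongly countable.
   Context: A valuation domain is an integral domain whose ideals are linearly ordered by inclusion. For an $R$-submodule $J$ of $Q$ with $R\subseteq J$, not countably generated, write $J=\bigcup_{\sigma<\omega_1} r_\sigma^{-1}R$ with nonzero $r_\sigma\in R$ such that for $\tau<\sigma$, $r_\tau\mid r_\sigma$ and $r_\sigma\nmid r_\tau$. The type $J/R$ is essentially uncountable if for every $\sigma<\omega_1$ there is $\tau>\sigma$ with $r_\sigma R/r_\tau R$ uncountable; otherwise it is essentially countable (equivalently, there is $\gamma<\omega_1$ with $r_\gamma R/r_\sigma R$ countable for all $\gamma<\sigma<\omega_1$). It is strongly countable if $R/r_\sigma R$ is countable for all $\sigma<\omega_1$. These notions are independent of the choice of the $r_\sigma$. *)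

theory Defs
  imports Main "HOL-Computational_Algebra.Fraction_Field" "HOL-Library.Countable_Set"
begin

definition is_ideal :: "'a::comm_ring_1 set \<Rightarrow> bool" where
  "is_ideal I \<longleftrightarrow> 0 \<in> I \<and> (\<forall>x\<in>I. \<forall>y\<in>I. x + y \<in> I) \<and> (\<forall>r x. x \<in> I \<longrightarrow> r * x \<in> I)"

definition valuation_domain :: "'a::idom itself \<Rightarrow> bool" where
  "valuation_domain _ \<longleftrightarrow>
     (\<forall>I J :: 'a set. is_ideal I \<and> is_ideal J \<longrightarrow> I \<subseteq> J \<or> J \<subseteq> I)"

definition emb :: "'a::idom \<Rightarrow> 'a fract" where
  "emb a = Fraction_Field.Fract a 1"

definition R_span :: "'a::idom fract set \<Rightarrow> 'a fract set" where
  "R_span S = {q. \<exists>F c. finite F \<and> F \<subseteq> S \<and> q = (\<Sum>s\<in>F. emb (c s) * s)}"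

definition countably_generated_Q :: "'a::idom itself \<Rightarrow> bool" where
  "countably_generated_Q _ \<longleftrightarrow> (\<exists>S :: 'a fract set. countable S \<and> R_span S = UNIV)"

abbreviation omega1 :: "nat set rel" where
  "omega1 \<equiv> cardSuc natLeq"

abbreviation ord_less :: "nat set \<Rightarrow> nat set \<Rightarrow> bool" where
  "ord_less \<tau> \<sigma> \<equiv> (\<tau>, \<sigma>) \<in> omega1 \<and> \<tau> \<noteq> \<sigma>"

definition inv_R :: "'a::idom \<Rightarrow> 'a fract set" where
  "inv_R r = {Fraction_Field.Fract x r | x. True}"

definition Q_representation :: "(nat set \<Rightarrow> 'a::idom) \<Rightarrow> bool" where
  "Q_representation r \<longleftrightarrow>
     (\<forall>\<sigma>\<in>Field omega1. r \<sigma> \<noteq> 0) \<and>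
     (UNIV :: 'a fract set) = (\<Union>\<sigma>\<in>Field omega1. inv_R (r \<sigma>)) \<and>
     (\<forall>\<sigma>\<in>Field omega1. \<forall>\<tau>\<in>Field omega1. ord_less \<tau> \<sigma> \<longrightarrow>
         r \<tau> dvd r \<sigma> \<and> \<not> r \<sigma> dvd r \<tau>)"

(* The quotient module aR / bR, as the set of cosets x + bR for x in aR. *)
definition quot_mod :: "'a::idom \<Rightarrow> 'a \<Rightarrow> 'a set set" where
  "quot_mod a b = (\<lambda>x. {y. b dvd (y - x)}) ` {x. a dvd x}"

definition essentially_uncountable :: "(nat set \<Rightarrow> 'a::idom) \<Rightarrow> bool" where
  "essentially_uncountable r \<longleftrightarrow>
     (\<forall>\<sigma>\<in>Field omega1. \<exists>\<tau>\<in>Field omega1. ord_less \<sigma> \<tau> \<and>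
        uncountable (quot_mod (r \<sigma>) (r \<tau>)))"

definition essentially_countable :: "(nat set \<Rightarrow> 'a::idom) \<Rightarrow> bool" where
  "essentially_countable r \<longleftrightarrow> \<not> essentially_uncountable r"

definition strongly_countable :: "(nat set \<Rightarrow> 'a::idom) \<Rightarrow> bool" where
  "strongly_countable r \<longleftrightarrow> (\<forall>\<sigma>\<in>Field omega1. countable (quot_mod 1 (r \<sigma>)))"

end

theory Submission
  imports Defs
begin

(* Choose gamma as in the definition of essentially countable. Since 1/r_gamma^2 lies in some
   r_sigma^-1 R, we get r_gamma^2 | r_sigma. If sigma <= gamma this makes r_gamma a unit;
   otherwise R/r_gamma R, being isomorphic to r_gamma R/r_gamma^2 R, is a quotient of the
   countable module r_gamma R/r_sigma R. Then for rho > gamma the module R/r_rho R is an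
   extension of R/r_gamma R by the countable r_gamma R/r_rho R, and for rho <= gamma it is a
   quotient of R/r_gamma R. *)

lemma countable_image_if_factors:
  assumes "countable (f ` A)" and "\<And>x y. x \<in> A \<Longrightarrow> y \<in> A \<Longrightarrow> f x = f y \<Longrightarrow> g x = g y"
  shows "countable (g ` A)"
proof -
  have "g x = g (inv_into A f (f x))" if "x \<in> A" for x
    using that by (intro assms(2)) (simp_all add: inv_into_into f_inv_into_f)
  then have "g ` A = (\<lambda>c. g (inv_into A f c)) ` (f ` A)"
    by (simp add: image_image cong: image_cong)
  with assms(1) show ?thesis by simp
qed

definition coset :: "'a::idom \<Rightarrow> 'a \<Rightarrow> 'a set" where
  "coset b x = {y. b dvd y - x}"

lemma quot_mod_eq: "quot_mod a b = coset b ` {x. a dvd x}"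
  unfolding quot_mod_def coset_def ..

lemma coset_eq_iff: "coset b x = coset b x' \<longleftrightarrow> b dvd x - x'"
proof
  assume "coset b x = coset b x'"
  moreover have "x \<in> coset b x" by (simp add: coset_def)
  ultimately show "b dvd x - x'" by (simp add: coset_def)
next
  assume "b dvd x - x'"
  then have "b dvd y - x \<longleftrightarrow> b dvd y - x'" for y
    by (metis diff_add_cancel dvd_add_left_iff dvd_diff add_diff_eq)
  then show "coset b x = coset b x'" by (simp add: coset_def)
qed

lemma coset_translate: "(\<lambda>y. y + t) ` coset b x = coset b (x + t)"
proof -
  have "z \<in> (\<lambda>y. y + t) ` coset b x \<longleftrightarrow> z - t \<in> coset b x" for z
    by (auto intro: rev_image_eqI[of "z - t"])
  then show ?thesis by (auto simp: coset_def algebra_simps)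
qed

lemma countable_quot_mod_unit:
  assumes "b dvd 1"
  shows "countable (quot_mod a b)"
proof -
  have "coset b x = UNIV" for x
    using assms by (auto simp: coset_def dvd_trans)
  then have "quot_mod a b \<subseteq> {UNIV}" by (auto simp: quot_mod_eq)
  then show ?thesis by (rule countable_subset) simp
qed

lemma countable_quot_mod_dvd:
  assumes "s dvd g" and "countable (quot_mod a g)"
  shows "countable (quot_mod a s)"
  using assms(2) unfolding quot_mod_eq
  by (rule countable_image_if_factors) (use assms(1) in \<open>auto simp: coset_eq_iff dvd_trans\<close>)

lemma countable_quot_mod_one_if_square:
  assumes "g \<noteq> 0" and "countable (quot_mod g (g * g))"
  shows "countable (quot_mod 1 g)"
proof -
  have "{x. g dvd x} = (*) g ` UNIV" by (auto simp: dvd_def)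
  then have "countable ((\<lambda>x. coset (g * g) (g * x)) ` UNIV)"
    using assms(2) by (simp add: quot_mod_eq image_image)
  then have "countable (coset g ` UNIV)"
    by (rule countable_image_if_factors) (use assms(1) in \<open>simp add: coset_eq_iff right_diff_distrib[symmetric]\<close>)
  then show ?thesis by (simp add: quot_mod_eq)
qed

lemma countable_quot_mod_trans:
  assumes "countable (quot_mod a g)" and "countable (quot_mod g s)"
  shows "countable (quot_mod a s)"
proof -
  define rep where "rep C = (SOME t. a dvd t \<and> C = coset g t)" for C
  let ?lift = "\<lambda>(C, U). (\<lambda>y. y + rep C) ` U"
  have "quot_mod a s \<subseteq> ?lift ` (quot_mod a g \<times> quot_mod g s)"
  proof
    fix D assume "D \<in> quot_mod a s"
    then obtain x where x: "a dvd x" and D: "D = coset s x" by (auto simp: quot_mod_eq)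
    define C where "C = coset g x"
    have "a dvd rep C \<and> C = coset g (rep C)"
      unfolding rep_def by (rule someI[of _ x]) (simp add: x C_def)
    then have rep: "a dvd rep C" "g dvd x - rep C" by (auto simp: C_def coset_eq_iff)
    have "D = ?lift (C, coset s (x - rep C))" by (simp add: D coset_translate)
    moreover have "C \<in> quot_mod a g" using x by (auto simp: C_def quot_mod_eq)
    moreover have "coset s (x - rep C) \<in> quot_mod g s" using rep by (auto simp: quot_mod_eq)
    ultimately show "D \<in> ?lift ` (quot_mod a g \<times> quot_mod g s)" by blast
  qed
  then show ?thesis by (rule countable_subset) (use assms in simp)
qed

lemma omega1_less_or_ge:
  assumes "\<gamma> \<in> Field omega1" and "\<rho> \<in> Field omega1"
  shows "ord_less \<gamma> \<rho> \<or> (\<rho>, \<gamma>) \<in> omega1"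
proof -
  have "Linear_order omega1"
    using cardSuc_Well_order[OF natLeq_Card_order] by (simp add: well_order_on_def)
  from Linear_order_in_diff_Id[OF this assms(2,1)] show ?thesis by blast
qed

lemma Q_representation_mono_dvd:
  assumes "Q_representation r" and "(\<tau>, \<sigma>) \<in> omega1"
  shows "r \<tau> dvd r \<sigma>"
proof (cases "\<tau> = \<sigma>")
  case False
  have "\<forall>\<sigma>\<in>Field omega1. \<forall>\<tau>\<in>Field omega1. ord_less \<tau> \<sigma> \<longrightarrow> r \<tau> dvd r \<sigma> \<and> \<not> r \<sigma> dvd r \<tau>"
    using assms(1) unfolding Q_representation_def by blast
  with False assms(2) show ?thesis by (meson FieldI1 FieldI2)
qed simp

lemma Q_representation_nonzero:
  assumes "Q_representation r" and "\<sigma> \<in> Field omega1"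
  shows "r \<sigma> \<noteq> 0"
  using assms unfolding Q_representation_def by blast

lemma Q_representation_dvdE:
  assumes "Q_representation r" and "c \<noteq> 0"
  obtains \<sigma> where "\<sigma> \<in> Field omega1" and "c dvd r \<sigma>"
proof -
  have "Fraction_Field.Fract 1 c \<in> (\<Union>\<sigma>\<in>Field omega1. inv_R (r \<sigma>))"
    using assms(1) unfolding Q_representation_def by (metis UNIV_I)
  then obtain \<sigma> x where \<sigma>: "\<sigma> \<in> Field omega1"
    and "Fraction_Field.Fract 1 c = Fraction_Field.Fract x (r \<sigma>)"
    by (auto simp: inv_R_def)
  then have "r \<sigma> = x * c"
    using assms(2) Q_representation_nonzero[OF assms(1) \<sigma>] by (simp add: eq_fract)
  with \<sigma> show ?thesis using that by simp
qed

lemma Q_representation_countable_base: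
  assumes rep: "Q_representation r" and \<gamma>: "\<gamma> \<in> Field omega1"
    and above: "\<And>\<tau>. \<tau> \<in> Field omega1 \<Longrightarrow> ord_less \<gamma> \<tau> \<Longrightarrow> countable (quot_mod (r \<gamma>) (r \<tau>))"
  shows "countable (quot_mod 1 (r \<gamma>))"
proof -
  have nonzero: "r \<gamma> \<noteq> 0" using Q_representation_nonzero[OF rep \<gamma>] .
  then obtain \<sigma> where \<sigma>: "\<sigma> \<in> Field omega1" and sq: "r \<gamma> * r \<gamma> dvd r \<sigma>"
    using Q_representation_dvdE[OF rep] by (metis mult_eq_0_iff)
  consider "ord_less \<gamma> \<sigma>" | "(\<sigma>, \<gamma>) \<in> omega1" using omega1_less_or_ge[OF \<gamma> \<sigma>] by blast
  then show ?thesis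
  proof cases
    case 1
    have "countable (quot_mod (r \<gamma>) (r \<gamma> * r \<gamma>))"
      by (rule countable_quot_mod_dvd[OF sq above[OF \<sigma> 1]])
    with nonzero show ?thesis by (rule countable_quot_mod_one_if_square)
  next
    case 2
    then have "r \<gamma> * r \<gamma> dvd r \<gamma> * 1"
      using dvd_trans[OF sq Q_representation_mono_dvd[OF rep]] by simp
    with nonzero have "r \<gamma> dvd 1" by simp
    then show ?thesis by (rule countable_quot_mod_unit)
  qed
qed

lemma Q_representation_strongly_countable:
  assumes rep: "Q_representation r" and \<gamma>: "\<gamma> \<in> Field omega1"
    and above: "\<And>\<tau>. \<tau> \<in> Field omega1 \<Longrightarrow> ord_less \<gamma> \<tau> \<Longrightarrow> countable (quot_mod (r \<gamma>) (r \<tau>))"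
  shows "strongly_countable r"
  unfolding strongly_countable_def
proof
  fix \<rho> assume \<rho>: "\<rho> \<in> Field omega1"
  have base: "countable (quot_mod 1 (r \<gamma>))"
    using Q_representation_countable_base[OF rep \<gamma> above] .
  consider "ord_less \<gamma> \<rho>" | "(\<rho>, \<gamma>) \<in> omega1" using omega1_less_or_ge[OF \<gamma> \<rho>] by blast
  then show "countable (quot_mod 1 (r \<rho>))"
  proof cases
    case 1
    show ?thesis by (rule countable_quot_mod_trans[OF base above[OF \<rho> 1]])
  next
    case 2
    show ?thesis by (rule countable_quot_mod_dvd[OF Q_representation_mono_dvd[OF rep 2] base])
  qed
qed

lemma essentially_countableE:
  assumes "essentially_countable r"
  obtains \<gamma> where "\<gamma> \<in> Field omega1"
    and "\<And>\<tau>. \<tau> \<in> Field omega1 \<Longrightarrow> ord_less \<gamma> \<tau> \<Longrightarrow> countable (quot_mod (r \<gamma>) (r \<tau>))"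
proof -
  from assms obtain \<gamma> where "\<gamma> \<in> Field omega1"
    and "\<not> (\<exists>\<tau>\<in>Field omega1. ord_less \<gamma> \<tau> \<and> uncountable (quot_mod (r \<gamma>) (r \<tau>)))"
    unfolding essentially_countable_def essentially_uncountable_def ball_simps(10) by (rule bexE)
  with that show ?thesis by metis
qed

theorem mainTheorem3:
  fixes r :: "nat set \<Rightarrow> 'a::idom"
  assumes "valuation_domain TYPE('a)"
    and "(card_of (UNIV :: 'a set), cardSuc natLeq) \<in> ordIso"
    and "\<not> countably_generated_Q TYPE('a)"
    and "Q_representation r"
    and "essentially_countable r"
  shows "strongly_countable r"
proof -
  obtain \<gamma> where \<gamma>: "\<gamma> \<in> Field omega1"
    and above: "\<And>\<tau>. \<tau> \<in> Field omega1 \<Longrightarrow> ord_less \<gamma> \<tau> \<Longrightarrow> countable (quot_mod (r \<gamma>) (r \<tau>))"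
    using assms(5) by (rule essentially_countableE) blast
  show ?thesis by (rule Q_representation_strongly_countable[OF assms(4) \<gamma> above])
qed

end
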